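(* Let $G$ be a full 1-plane graph satisfying the kite-edge standing assumption, and let $S$ be a minimal separating set of $G$. Then every transition face $F$ of $G^\times$ has, on its boundary walk, at least two occurrences of vertices of $S$ (either two distinct vertices of $S$, or two incidences with the same vertex of $S$).
   Context: A 1-plane graph is a graph $G$ with a good drawing in the plane (edges are simple curves; two edges intersect only at a common endpoint or a proper crossing; any two edges intersect at most once; no three edges cross at one point) in which every edge is crossed at most once. For a crossing of edges $(u,v)$ and $(w,x)$, its endpoints are $u,v,w,x$; two endpoints are consecutive if they are not $\{u,v\}$ and not $\{w,x\}$. $G$ is full 1-plane if for every crossing every two consecutive endpoints are adjacent. The planarization $G^\times$ replaces each crossing point by a new dummy vertex adjacent to the four endpoints. An edge joining consecutive endpoints $u,x$ of a crossing with dummy vertex $c$ is a kite edge if it is uncrossed and $G^\times$ has a face bounded exactly by it and $(u,c),(c,x)$. Standing assumption: for every crossing and every pair of adjacent consecutive endpoints, some edge joining them is a kite edge of that crossing. A separating set $S\subseteq V(G)$ is one with $G-S$ disconnected; the flaps are the connected components of $G-S$. A face $F$ of $G^\times$ is a transition face (with respect to $S$) if $F$ is incident to an edge of $G^\times$ both of whose endpoints are in $S$, or $F$ is incident to vertices from two different flaps of $G-S$. *)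

theory Defs
  imports Main
begin

text \<open>
Combinatorial encoding of the planarization G^x of a 1-plane (multi)graph G.
G^x is given as a plane combinatorial map (rotation system):
  D      finite set of darts (half-edges) of G^x,
  alpha  fixed-point-free involution on D (the two darts of one edge of G^x),
  sigma  rotation: permutation of D whose cycles are the darts around a vertex,
  tail   the vertex a dart leaves from,
  V      vertex set of G^x,
  C      the dummy (crossing) vertices; V - C are the vertices of G.
Faces of G^x are the orbits of sigma o alpha; the orbit of a face, read in order,
is its boundary walk, each dart d in it being one occurrence of the vertex tail d.
\<close>

definition orb :: "('d \<Rightarrow> 'd) \<Rightarrow> 'd \<Rightarrow> 'd set" where
  "orb f d = {(f ^^ n) d | n. True}"

definition faces :: "'d set \<Rightarrow> ('d \<Rightarrow> 'd) \<Rightarrow> ('d \<Rightarrow> 'd) \<Rightarrow> 'd set set" where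
  "faces D alpha sigma = (\<lambda>d. orb (sigma \<circ> alpha) d) ` D"

definition comb_map ::
  "'d set \<Rightarrow> ('d \<Rightarrow> 'd) \<Rightarrow> ('d \<Rightarrow> 'd) \<Rightarrow> ('d \<Rightarrow> 'v) \<Rightarrow> 'v set \<Rightarrow> bool" where
  "comb_map D alpha sigma tail V \<longleftrightarrow>
     finite D \<and> finite V \<and>
     (\<forall>d\<in>D. alpha d \<in> D \<and> alpha d \<noteq> d \<and> alpha (alpha d) = d) \<and>
     bij_betw sigma D D \<and>
     tail ` D = V \<and>
     (\<forall>d\<in>D. \<forall>d'\<in>D. tail d = tail d' \<longleftrightarrow> d' \<in> orb sigma d)"

definition gx_adj :: "'d set \<Rightarrow> ('d \<Rightarrow> 'd) \<Rightarrow> ('d \<Rightarrow> 'v) \<Rightarrow> 'v \<Rightarrow> 'v \<Rightarrow> bool" where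
  "gx_adj D alpha tail u v \<longleftrightarrow> (\<exists>d\<in>D. tail d = u \<and> tail (alpha d) = v)"

text \<open>a connected map of genus 0 (Euler: |V| - |E| + |F| = 2, with |E| = |D|/2)\<close>
definition plane_map ::
  "'d set \<Rightarrow> ('d \<Rightarrow> 'd) \<Rightarrow> ('d \<Rightarrow> 'd) \<Rightarrow> ('d \<Rightarrow> 'v) \<Rightarrow> 'v set \<Rightarrow> bool" where
  "plane_map D alpha sigma tail V \<longleftrightarrow>
     comb_map D alpha sigma tail V \<and>
     (\<forall>u\<in>V. \<forall>v\<in>V. (u, v) \<in> {(a, b). gx_adj D alpha tail a b}\<^sup>*) \<and>
     2 * card V + 2 * card (faces D alpha sigma) = card D + 4"

text \<open>G^x is the planarization of a 1-plane graph G (good drawing, every edge crossed at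
most once): every dummy vertex has degree 4, its 4 neighbours are distinct vertices of G
(crossing edges share no endpoint and are not loops); edges of G are not loops.
The two edges of G crossing at a dummy vertex c consist of opposite darts in the
rotation at c, i.e. d and sigma (sigma d).\<close>
definition one_plane_planarization ::
  "'d set \<Rightarrow> ('d \<Rightarrow> 'd) \<Rightarrow> ('d \<Rightarrow> 'd) \<Rightarrow> ('d \<Rightarrow> 'v) \<Rightarrow> 'v set \<Rightarrow> 'v set \<Rightarrow> bool" where
  "one_plane_planarization D alpha sigma tail V C \<longleftrightarrow>
     plane_map D alpha sigma tail V \<and> C \<subseteq> V \<and>
     (\<forall>d\<in>D. tail d \<notin> C \<longrightarrow> tail (alpha d) \<noteq> tail d) \<and>
     (\<forall>c\<in>C. card {d\<in>D. tail d = c} = 4 \<and>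
             inj_on (\<lambda>d. tail (alpha d)) {d\<in>D. tail d = c} \<and>
             (\<forall>d\<in>D. tail d = c \<longrightarrow> tail (alpha d) \<notin> C))"

text \<open>adjacency in G: an uncrossed edge (a G^x edge between two real vertices) or a
crossed edge (two opposite half-edges at a dummy vertex)\<close>
definition adjG ::
  "'d set \<Rightarrow> ('d \<Rightarrow> 'd) \<Rightarrow> ('d \<Rightarrow> 'd) \<Rightarrow> ('d \<Rightarrow> 'v) \<Rightarrow> 'v set \<Rightarrow> 'v set \<Rightarrow> 'v \<Rightarrow> 'v \<Rightarrow> bool" where
  "adjG D alpha sigma tail V C u v \<longleftrightarrow>
     u \<in> V - C \<and> v \<in> V - C \<and>
     ((\<exists>d\<in>D. tail d = u \<and> tail (alpha d) = v) \<or>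
      (\<exists>d\<in>D. tail d \<in> C \<and> tail (alpha d) = u \<and> tail (alpha (sigma (sigma d))) = v))"

text \<open>full: consecutive endpoints of every crossing are adjacent in G. For a dart d at
the dummy c, tail (alpha d) and tail (alpha (sigma d)) are consecutive endpoints, and all
consecutive pairs arise this way.\<close>
definition full_1plane ::
  "'d set \<Rightarrow> ('d \<Rightarrow> 'd) \<Rightarrow> ('d \<Rightarrow> 'd) \<Rightarrow> ('d \<Rightarrow> 'v) \<Rightarrow> 'v set \<Rightarrow> 'v set \<Rightarrow> bool" where
  "full_1plane D alpha sigma tail V C \<longleftrightarrow>
     (\<forall>d\<in>D. tail d \<in> C \<longrightarrow>
        adjG D alpha sigma tail V C (tail (alpha d)) (tail (alpha (sigma d))))"

definition face_edges :: "('d \<Rightarrow> 'd) \<Rightarrow> 'd set \<Rightarrow> 'd set set" where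
  "face_edges alpha f = (\<lambda>d. {d, alpha d}) ` f"

text \<open>The G^x edge {e, alpha e} is a kite edge of the crossing at c = tail d for the
consecutive endpoints tail (alpha d), tail (alpha (sigma d)): it is an uncrossed edge
of G joining them and some face of G^x is bounded exactly by it and the two half-edges
(u,c), (c,x).\<close>
definition kite_edge ::
  "'d set \<Rightarrow> ('d \<Rightarrow> 'd) \<Rightarrow> ('d \<Rightarrow> 'd) \<Rightarrow> ('d \<Rightarrow> 'v) \<Rightarrow> 'v set \<Rightarrow> 'd \<Rightarrow> 'd \<Rightarrow> bool" where
  "kite_edge D alpha sigma tail C e d \<longleftrightarrow>
     e \<in> D \<and> tail e \<notin> C \<and> tail (alpha e) \<notin> C \<and>
     {tail e, tail (alpha e)} = {tail (alpha d), tail (alpha (sigma d))} \<and>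
     (\<exists>f\<in>faces D alpha sigma.
        face_edges alpha f = {{e, alpha e}, {d, alpha d}, {sigma d, alpha (sigma d)}})"

definition kite_assumption ::
  "'d set \<Rightarrow> ('d \<Rightarrow> 'd) \<Rightarrow> ('d \<Rightarrow> 'd) \<Rightarrow> ('d \<Rightarrow> 'v) \<Rightarrow> 'v set \<Rightarrow> 'v set \<Rightarrow> bool" where
  "kite_assumption D alpha sigma tail V C \<longleftrightarrow>
     (\<forall>d\<in>D. tail d \<in> C \<longrightarrow>
        adjG D alpha sigma tail V C (tail (alpha d)) (tail (alpha (sigma d))) \<longrightarrow>
        (\<exists>e. kite_edge D alpha sigma tail C e d))"

definition conn_minus ::
  "'d set \<Rightarrow> ('d \<Rightarrow> 'd) \<Rightarrow> ('d \<Rightarrow> 'd) \<Rightarrow> ('d \<Rightarrow> 'v) \<Rightarrow> 'v set \<Rightarrow> 'v set \<Rightarrow> 'v set \<Rightarrow> 'v \<Rightarrow> 'v \<Rightarrow> bool" where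
  "conn_minus D alpha sigma tail V C S u v \<longleftrightarrow>
     (u, v) \<in> {(a, b). adjG D alpha sigma tail V C a b \<and> a \<notin> S \<and> b \<notin> S}\<^sup>*"

definition separating ::
  "'d set \<Rightarrow> ('d \<Rightarrow> 'd) \<Rightarrow> ('d \<Rightarrow> 'd) \<Rightarrow> ('d \<Rightarrow> 'v) \<Rightarrow> 'v set \<Rightarrow> 'v set \<Rightarrow> 'v set \<Rightarrow> bool" where
  "separating D alpha sigma tail V C S \<longleftrightarrow>
     S \<subseteq> V - C \<and>
     (\<exists>u\<in>V - C - S. \<exists>v\<in>V - C - S. \<not> conn_minus D alpha sigma tail V C S u v)"

definition minimal_separating ::
  "'d set \<Rightarrow> ('d \<Rightarrow> 'd) \<Rightarrow> ('d \<Rightarrow> 'd) \<Rightarrow> ('d \<Rightarrow> 'v) \<Rightarrow> 'v set \<Rightarrow> 'v set \<Rightarrow> 'v set \<Rightarrow> bool" where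
  "minimal_separating D alpha sigma tail V C S \<longleftrightarrow>
     separating D alpha sigma tail V C S \<and>
     (\<forall>T. T \<subset> S \<longrightarrow> \<not> separating D alpha sigma tail V C T)"

definition transition_face ::
  "'d set \<Rightarrow> ('d \<Rightarrow> 'd) \<Rightarrow> ('d \<Rightarrow> 'd) \<Rightarrow> ('d \<Rightarrow> 'v) \<Rightarrow> 'v set \<Rightarrow> 'v set \<Rightarrow> 'v set \<Rightarrow> 'd set \<Rightarrow> bool" where
  "transition_face D alpha sigma tail V C S f \<longleftrightarrow>
     (\<exists>d\<in>f. tail d \<in> S \<and> tail (alpha d) \<in> S) \<or>
     (\<exists>d1\<in>f. \<exists>d2\<in>f. tail d1 \<in> V - C - S \<and> tail d2 \<in> V - C - S \<and>
        \<not> conn_minus D alpha sigma tail V C S (tail d1) (tail d2))"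

end

theory Submission
  imports Defs "HOL-Combinatorics.Orbits"
begin

text \<open>
On the boundary walk of a face of G^x, the vertices just before and after a crossing vertex
are consecutive endpoints of that crossing, hence adjacent in G because G is full, while two
consecutive vertices of G on the walk are joined by an uncrossed edge. So a stretch of the
walk that avoids S stays within one flap. A face meeting two flaps therefore visits S on
each of the two arcs of its walk between them, and a face along an edge with both ends in S
visits both ends one after the other.
\<close>

lemma self_in_orbit_if_inj_on_finite:
  assumes "finite A" "f ` A \<subseteq> A" "inj_on f A" "x \<in> A"
  shows "x \<in> orbit f x"
proof -
  have bij: "bij_betw (f ^^ n) A A" for n
    using assms(1-3) by (intro bij_betw_funpow) (simp add: bij_betw_def endo_inj_surj)
  then have "range (\<lambda>n. (f ^^ n) x) \<subseteq> A"
    using assms(4) bij_betwE by blast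
  then have "\<not> inj (\<lambda>n. (f ^^ n) x)"
    using assms(1) finite_imageD infinite_UNIV_nat rev_finite_subset by blast
  then obtain a b where ab: "a < b" "(f ^^ a) x = (f ^^ b) x"
    by (metis injI linorder_neqE_nat)
  then have "(f ^^ a) x = (f ^^ a) ((f ^^ (b - a)) x)"
    by (metis funpow_add le_add_diff_inverse less_imp_le_nat o_apply)
  moreover have "(f ^^ (b - a)) x \<in> A"
    using bij assms(4) bij_betwE by blast
  ultimately have "(f ^^ (b - a)) x = x"
    using bij[of a] assms(4) by (metis bij_betw_imp_inj_on inj_onD)
  then show ?thesis
    using ab(1) by (auto simp: orbit_altdef intro!: exI[of _ "b - a"])
qed

lemma orb_eq_orbit: "x \<in> orbit f x \<Longrightarrow> orb f x = orbit f x"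
  unfolding orb_def by (rule orbit_altdef_self_in[symmetric])

lemma card_orb_eq_funpow_dist1:
  assumes "x \<in> orbit f x"
  shows "card (orb f x) = funpow_dist1 f x x"
  using orbit_conv_funpow_dist1[OF assms] inj_on_funpow_dist1[OF assms]
  by (simp add: orb_eq_orbit[OF assms] card_image)

lemma funpow_card_orb: "x \<in> orbit f x \<Longrightarrow> (f ^^ card (orb f x)) x = x"
  using funpow_dist1_prop card_orb_eq_funpow_dist1 by metis

lemma orb_eq_funpow_image:
  "x \<in> orbit f x \<Longrightarrow> orb f x = (\<lambda>n. (f ^^ n) x) ` {..<card (orb f x)}"
  using orbit_conv_funpow_dist1 card_orb_eq_funpow_dist1 orb_eq_orbit atLeast0LessThan
  by metis

lemma inj_on_funpow_orb:
  "x \<in> orbit f x \<Longrightarrow> inj_on (\<lambda>n. (f ^^ n) x) {..<card (orb f x)}"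
  using inj_on_funpow_dist1 card_orb_eq_funpow_dist1 atLeast0LessThan by metis

lemma two_le_card_filter:
  assumes "finite A" "x \<in> A" "y \<in> A" "x \<noteq> y" "P x" "P y"
  shows "2 \<le> card {a \<in> A. P a}"
proof -
  have "card {x, y} \<le> card {a \<in> A. P a}"
    using assms by (intro card_mono) auto
  then show ?thesis
    using assms(4) by simp
qed

lemma orb_closed: "y \<in> orb f x \<Longrightarrow> f y \<in> orb f x"
  unfolding orb_def by (auto intro: exI[of _ "Suc n" for n])

locale full_planarization =
  fixes D :: "'d set" and alpha sigma :: "'d \<Rightarrow> 'd" and tail :: "'d \<Rightarrow> 'v"
    and V C :: "'v set"
  assumes planarization: "one_plane_planarization D alpha sigma tail V C"
    and full: "full_1plane D alpha sigma tail V C"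
begin

definition face_step :: "'d \<Rightarrow> 'd" where
  "face_step = sigma \<circ> alpha"

abbreviation adj :: "'v \<Rightarrow> 'v \<Rightarrow> bool" where
  "adj \<equiv> adjG D alpha sigma tail V C"

abbreviation conn :: "'v set \<Rightarrow> 'v \<Rightarrow> 'v \<Rightarrow> bool" where
  "conn \<equiv> conn_minus D alpha sigma tail V C"

lemma finite_darts: "finite D"
  and alpha_in: "d \<in> D \<Longrightarrow> alpha d \<in> D"
  and alpha_alpha: "d \<in> D \<Longrightarrow> alpha (alpha d) = d"
  and bij_sigma: "bij_betw sigma D D"
  and tail_in: "d \<in> D \<Longrightarrow> tail d \<in> V"
  and tail_eq_iff: "d \<in> D \<Longrightarrow> d' \<in> D \<Longrightarrow> tail d = tail d' \<longleftrightarrow> d' \<in> orb sigma d"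
  and no_loop: "d \<in> D \<Longrightarrow> tail d \<notin> C \<Longrightarrow> tail (alpha d) \<noteq> tail d"
  and card_crossing: "c \<in> C \<Longrightarrow> card {d \<in> D. tail d = c} = 4"
  and crossing_neighbour_notin_crossings: "d \<in> D \<Longrightarrow> tail d \<in> C \<Longrightarrow> tail (alpha d) \<notin> C"
  using planarization
  unfolding one_plane_planarization_def plane_map_def comb_map_def by blast+

lemma sigma_in: "d \<in> D \<Longrightarrow> sigma d \<in> D"
  using bij_sigma bij_betwE by blast

lemma tail_sigma: "d \<in> D \<Longrightarrow> tail (sigma d) = tail d"
  using tail_eq_iff[of d "sigma d"] sigma_in by (auto simp: orb_def intro: exI[of _ 1])

lemma face_step_in: "d \<in> D \<Longrightarrow> face_step d \<in> D"
  by (simp add: face_step_def alpha_in sigma_in)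

lemma funpow_face_step_in: "d \<in> D \<Longrightarrow> (face_step ^^ n) d \<in> D"
  by (induction n) (simp_all add: face_step_in)

lemma tail_face_step: "d \<in> D \<Longrightarrow> tail (face_step d) = tail (alpha d)"
  by (simp add: face_step_def alpha_in tail_sigma)

lemma inj_on_face_step: "inj_on face_step D"
proof (rule inj_onI)
  fix x y assume "x \<in> D" "y \<in> D" "face_step x = face_step y"
  then have "alpha x = alpha y"
    using bij_sigma alpha_in unfolding face_step_def by (auto dest: bij_betw_imp_inj_on inj_onD)
  then show "x = y"
    using \<open>x \<in> D\<close> \<open>y \<in> D\<close> alpha_alpha by metis
qed

lemma self_in_face_orbit: "d \<in> D \<Longrightarrow> d \<in> orbit face_step d"
  using finite_darts inj_on_face_step face_step_in
  by (intro self_in_orbit_if_inj_on_finite) auto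

lemma orb_sigma_eq_darts_at: "d \<in> D \<Longrightarrow> orb sigma d = {d' \<in> D. tail d' = tail d}"
proof -
  assume d: "d \<in> D"
  have "(sigma ^^ n) d \<in> D \<and> tail ((sigma ^^ n) d) = tail d" for n
    by (induction n) (use d in \<open>auto simp: sigma_in tail_sigma\<close>)
  then have "orb sigma d \<subseteq> {d' \<in> D. tail d' = tail d}"
    by (auto simp: orb_def)
  moreover have "{d' \<in> D. tail d' = tail d} \<subseteq> orb sigma d"
  proof
    fix x assume "x \<in> {d' \<in> D. tail d' = tail d}"
    then show "x \<in> orb sigma d"
      using tail_eq_iff[OF d, of x] by simp
  qed
  ultimately show ?thesis by blast
qed

lemma sigma_funpow_4_at_crossing:
  assumes "d \<in> D" "tail d \<in> C"
  shows "(sigma ^^ 4) d = d"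
proof -
  have "d \<in> orbit sigma d"
    using finite_darts bij_sigma assms(1)
    by (intro self_in_orbit_if_inj_on_finite) (auto simp: bij_betw_def)
  moreover have "card (orb sigma d) = 4"
    using orb_sigma_eq_darts_at[OF assms(1)] card_crossing[OF assms(2)] by simp
  ultimately show ?thesis
    using funpow_card_orb by metis
qed

lemma adj_sym: "adj u v \<Longrightarrow> adj v u"
proof -
  assume uv: "adj u v"
  then have real: "u \<in> V - C" "v \<in> V - C"
    by (auto simp: adjG_def)
  from uv consider
      (uncrossed) d where "d \<in> D" "tail d = u" "tail (alpha d) = v"
    | (crossed) d where "d \<in> D" "tail d \<in> C" "tail (alpha d) = u"
        "tail (alpha (sigma (sigma d))) = v"
    unfolding adjG_def by blast
  then show "adj v u"
  proof cases
    case uncrossed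
    then show ?thesis
      using real alpha_in alpha_alpha by (auto simp: adjG_def)
  next
    case crossed
    have "sigma (sigma (sigma (sigma d))) = d"
      using sigma_funpow_4_at_crossing[OF crossed(1,2)] by (simp add: numeral_eq_Suc)
    moreover have "sigma (sigma d) \<in> D" "tail (sigma (sigma d)) \<in> C"
      using crossed sigma_in tail_sigma by auto
    ultimately show ?thesis
      using real crossed unfolding adjG_def by metis
  qed
qed

lemma conn_minus_sym: "conn S u v \<Longrightarrow> conn S v u"
proof -
  have "sym {(a, b). adj a b \<and> a \<notin> S \<and> b \<notin> S}"
    by (auto simp: sym_def adj_sym)
  then show "conn S u v \<Longrightarrow> conn S v u"
    unfolding conn_minus_def by (meson sym_rtrancl symD)
qed

lemma conn_minus_extend:
  "conn S u v \<Longrightarrow> adj v w \<Longrightarrow> v \<notin> S \<Longrightarrow> w \<notin> S \<Longrightarrow> conn S u w"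
  unfolding conn_minus_def by (simp add: rtrancl.rtrancl_into_rtrancl)

lemma adj_face_step:
  "d \<in> D \<Longrightarrow> tail d \<notin> C \<Longrightarrow> tail (face_step d) \<notin> C \<Longrightarrow> adj (tail d) (tail (face_step d))"
  using tail_face_step alpha_in tail_in unfolding adjG_def by auto

lemma tail_notin_crossings_before_crossing: "d \<in> D \<Longrightarrow> tail (face_step d) \<in> C \<Longrightarrow> tail d \<notin> C"
  using crossing_neighbour_notin_crossings[of "alpha d"] alpha_in alpha_alpha tail_face_step by auto

lemma adj_across_crossing:
  assumes "d \<in> D" "tail (face_step d) \<in> C"
  shows "adj (tail d) (tail (face_step (face_step d)))"
proof -
  have "alpha d \<in> D" "tail (alpha d) \<in> C"
    using assms alpha_in tail_face_step by auto
  then have "adj (tail (alpha (alpha d))) (tail (alpha (sigma (alpha d))))"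
    using full unfolding full_1plane_def by blast
  then show ?thesis
    using assms(1) alpha_alpha face_step_in tail_face_step by (simp add: face_step_def)
qed

lemma conn_minus_along_face_walk:
  assumes "d \<in> D" "tail d \<notin> C" "tail ((face_step ^^ k) d) \<notin> C"
    and "\<forall>m\<le>k. tail ((face_step ^^ m) d) \<notin> S"
  shows "conn S (tail d) (tail ((face_step ^^ k) d))"
  using assms(3,4)
proof (induction k rule: less_induct)
  case (less k)
  show ?case
  proof (cases k)
    case 0
    then show ?thesis by (simp add: conn_minus_def)
  next
    case (Suc j)
    define x where "x = (face_step ^^ j) d"
    have x: "x \<in> D" "(face_step ^^ k) d = face_step x"
      using Suc assms(1) funpow_face_step_in by (auto simp: x_def)
    have not_S: "tail x \<notin> S" "tail (face_step x) \<notin> S"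
      using less.prems(2) Suc x(2) by (auto simp: x_def)
    show ?thesis
    proof (cases "tail x \<in> C")
      case False
      then have "conn S (tail d) (tail x)"
        using less Suc by (auto simp: x_def)
      moreover have "adj (tail x) (tail (face_step x))"
        using adj_face_step False x less.prems(1) by simp
      ultimately show ?thesis
        using conn_minus_extend not_S x(2) by simp
    next
      case True
      then obtain i where i: "j = Suc i"
        using assms(2) by (cases j) (auto simp: x_def)
      define y where "y = (face_step ^^ i) d"
      have y: "y \<in> D" "x = face_step y"
        using i assms(1) funpow_face_step_in by (auto simp: x_def y_def)
      then have "tail y \<notin> C"
        using True tail_notin_crossings_before_crossing by blast
      then have "conn S (tail d) (tail y)"
        using less Suc i by (auto simp: y_def)
      moreover have "adj (tail y) (tail (face_step x))"
        using adj_across_crossing True y by simp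
      moreover have "tail y \<notin> S"
        using less.prems(2) Suc i by (auto simp: y_def)
      ultimately show ?thesis
        using conn_minus_extend not_S x(2) by simp
    qed
  qed
qed

lemma face_walk_meets_separator:
  assumes "d \<in> D" "tail d \<in> V - C - S" "tail ((face_step ^^ k) d) \<in> V - C - S"
    and "\<not> conn S (tail d) (tail ((face_step ^^ k) d))"
  obtains m where "0 < m" "m < k" "tail ((face_step ^^ m) d) \<in> S"
proof -
  obtain m where m: "m \<le> k" "tail ((face_step ^^ m) d) \<in> S"
    using conn_minus_along_face_walk[of d k S] assms by auto
  moreover have "m \<noteq> 0" "m \<noteq> k"
    using m(2) assms(2,3) by (metis DiffD2 funpow_0)+
  ultimately show thesis
    using that by (simp add: gr0I)
qed

lemma face_orbE:
  assumes "f \<in> faces D alpha sigma"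
  obtains d0 where "d0 \<in> D" "f = orb face_step d0" "d0 \<in> orbit face_step d0"
  using assms self_in_face_orbit unfolding faces_def face_step_def by blast

lemma finite_face: "f \<in> faces D alpha sigma \<Longrightarrow> finite f"
proof -
  assume "f \<in> faces D alpha sigma"
  then obtain d0 where "d0 \<in> D" "f = orb face_step d0"
    by (rule face_orbE)
  then have "f \<subseteq> D"
    using funpow_face_step_in by (auto simp: orb_def)
  then show "finite f"
    using finite_darts finite_subset by blast
qed

lemma separator_edge_on_face:
  assumes "f \<in> faces D alpha sigma" "d \<in> f" "tail d \<in> S" "tail (alpha d) \<in> S" "S \<subseteq> V - C"
  shows "2 \<le> card {d \<in> f. tail d \<in> S}"
proof -
  obtain d0 where d0: "d0 \<in> D" "f = orb face_step d0"
    using assms(1) by (rule face_orbE)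
  then have d: "d \<in> D"
    using assms(2) funpow_face_step_in by (auto simp: orb_def)
  have "face_step d \<in> f"
    using orb_closed assms(2) d0(2) by simp
  moreover have "d \<noteq> face_step d"
    using tail_face_step[OF d] no_loop[OF d] assms(3,5) by auto
  moreover have "tail (face_step d) \<in> S"
    using tail_face_step[OF d] assms(4) by simp
  ultimately show ?thesis
    using two_le_card_filter[OF finite_face[OF assms(1)] assms(2), where P = "\<lambda>d. tail d \<in> S"]
      assms(3) by blast
qed

lemma separator_darts_on_both_arcs:
  fixes d0 :: 'd
  defines "f \<equiv> orb face_step d0" and "w \<equiv> \<lambda>n. (face_step ^^ n) d0"
  assumes d0: "d0 \<in> D" "d0 \<in> orbit face_step d0"
    and ij: "i < j" "j < card f"
    and flaps: "tail (w i) \<in> V - C - S" "tail (w j) \<in> V - C - S"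
      "\<not> conn S (tail (w i)) (tail (w j))"
  shows "2 \<le> card {d \<in> f. tail d \<in> S}"
proof -
  define P where "P = card f"
  have period: "w (n mod P) = w n" for n
    using funpow_card_orb[OF d0(2)] funpow_mod_eq by (simp add: w_def P_def f_def)
  have shift: "(face_step ^^ m) (w a) = w (a + m)" for a m
    by (simp add: w_def funpow_add add.commute[of a])
  have darts: "w n \<in> D" for n
    using d0(1) funpow_face_step_in by (simp add: w_def)
  obtain m1 where m1: "0 < m1" "m1 < j - i" "tail (w (i + m1)) \<in> S"
    using face_walk_meets_separator[of "w i" S "j - i"] flaps ij darts by (auto simp: shift)
  have "w (j + (P - j + i)) = w i"
    using period[of "j + (P - j + i)"] ij by (simp add: P_def)
  moreover have "\<not> conn S (tail (w j)) (tail (w i))"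
    using flaps(3) conn_minus_sym by blast
  ultimately obtain m2 where m2: "0 < m2" "m2 < P - j + i" "tail (w (j + m2)) \<in> S"
    using face_walk_meets_separator[of "w j" S "P - j + i"] flaps darts by (auto simp: shift)
  define k1 k2 where "k1 = i + m1" and "k2 = (j + m2) mod P"
  \<comment> \<open>the dart found on the second arc may lie past the end of the period\<close>
  have "k2 \<noteq> k1" "k1 < P" "k2 < P"
    using m1 m2 ij by (cases "j + m2 < P"; simp add: k1_def k2_def le_mod_geq P_def)+
  moreover have "inj_on w {..<P}"
    using inj_on_funpow_orb[OF d0(2)] unfolding w_def P_def f_def .
  ultimately have "w k2 \<noteq> w k1"
    by (simp add: inj_on_eq_iff)
  moreover have "w n \<in> f" for n
    by (auto simp: w_def f_def orb_def)
  moreover have "finite f"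
    using finite_orbit[OF d0(2)] orb_eq_orbit[OF d0(2)] by (simp add: f_def)
  moreover have "tail (w k1) \<in> S" "tail (w k2) \<in> S"
    using m1(3) m2(3) period[of "j + m2"] by (simp_all add: k1_def k2_def)
  ultimately show ?thesis
    using two_le_card_filter[where P = "\<lambda>d. tail d \<in> S"] by blast
qed

lemma face_meeting_two_flaps:
  assumes "f \<in> faces D alpha sigma" "d1 \<in> f" "d2 \<in> f"
    and "tail d1 \<in> V - C - S" "tail d2 \<in> V - C - S" "\<not> conn S (tail d1) (tail d2)"
  shows "2 \<le> card {d \<in> f. tail d \<in> S}"
proof -
  obtain d0 where d0: "d0 \<in> D" "f = orb face_step d0" "d0 \<in> orbit face_step d0"
    using assms(1) by (rule face_orbE)
  define w where "w = (\<lambda>n. (face_step ^^ n) d0)"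
  obtain i j where "d1 = w i" "d2 = w j" "i < card f" "j < card f"
    using assms(2,3) orb_eq_funpow_image[OF d0(3)] unfolding d0(2) w_def by blast
  with assms(4-6) have ij: "i < card f" "j < card f"
      "tail (w i) \<in> V - C - S" "tail (w j) \<in> V - C - S"
    and not_conn: "\<not> conn S (tail (w i)) (tail (w j))"
    by simp_all
  then have "i \<noteq> j"
    by (auto simp: conn_minus_def)
  then consider "i < j" | "j < i"
    by linarith
  then show ?thesis
  proof cases
    case 1
    show ?thesis
      using separator_darts_on_both_arcs[OF d0(1,3) 1, of S] ij not_conn
      unfolding d0(2) w_def by simp
  next
    case 2
    have "\<not> conn S (tail (w j)) (tail (w i))"
      using not_conn conn_minus_sym by blast
    then show ?thesis
      using separator_darts_on_both_arcs[OF d0(1,3) 2, of S] ij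
      unfolding d0(2) w_def by simp
  qed
qed

end

theorem claim1:
  fixes D :: "'d set" and alpha sigma :: "'d \<Rightarrow> 'd" and tail :: "'d \<Rightarrow> 'v"
    and V C S :: "'v set" and f :: "'d set"
  assumes "one_plane_planarization D alpha sigma tail V C"
    and "full_1plane D alpha sigma tail V C"
    and "kite_assumption D alpha sigma tail V C"
    and "minimal_separating D alpha sigma tail V C S"
    and "f \<in> faces D alpha sigma"
    and "transition_face D alpha sigma tail V C S f"
  shows "2 \<le> card {d \<in> f. tail d \<in> S}"
proof -
  interpret full_planarization D alpha sigma tail V C
    using assms(1,2) by unfold_locales
  have S: "S \<subseteq> V - C"
    using assms(4) by (simp add: minimal_separating_def separating_def)
  from assms(6) consider
      (separator_edge) d where "d \<in> f" "tail d \<in> S" "tail (alpha d) \<in> S"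
    | (two_flaps) d1 d2 where "d1 \<in> f" "d2 \<in> f" "tail d1 \<in> V - C - S" "tail d2 \<in> V - C - S"
        "\<not> conn_minus D alpha sigma tail V C S (tail d1) (tail d2)"
    unfolding transition_face_def by blast
  then show ?thesis
  proof cases
    case separator_edge
    then show ?thesis
      using separator_edge_on_face[OF assms(5) _ _ _ S] by blast
  next
    case two_flaps
    then show ?thesis
      by (rule face_meeting_two_flaps[OF assms(5)])
  qed
qed

end
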